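(* Let $\Sigma,\Gamma$ be finite alphabets, $k>0$, $f:\Sigma^*\to\Gamma^*$, and $\tau$ a tier on $\Sigma\cup\Gamma$. If $f$ is $k$-TISL on tier $\tau$, then there is a tier $\upsilon$ on $\Sigma\times\Gamma^*$ such that $f$ is $k$-TSSL on tier $\upsilon$. Likewise, if $f$ is $k$-TOSL on tier $\tau$, then there is a tier $\varphi$ on $\Sigma\times\Gamma^*$ such that $f$ is $k$-TSSL on tier $\varphi$.
   Context: Strings: $\lambda$ is the empty string; $\rtimes$ is a boundary symbol not in any alphabet. For $m\ge0$, $\mathrm{suff}^m(x)$ is the string of the last $m$ symbols of $\rtimes^mx$. $\mathrm{lcp}(A)$ is the longest common prefix of a set of strings $A$. For $f:\Sigma^*\to\Gamma^*$: $f^{\gets}(x):=\mathrm{lcp}(\{f(xy)\mid y\in\Sigma^*\})$, and $f^{\to}_x$ is defined by $f(xy)=f^{\gets}(x)f^{\to}_x(y)$. A tier on a (possibly infinite) alphabet $A$ is a homomorphism $\tau:A^*\to A^*$ with $\tau(a)\in\{a,\lambda\}$ for each $a\in A$. Given $i,j>0$ and a tier $\tau$ on $\Sigma\cup\Gamma$, $f$ is $i,j$-TIOSL on $\tau$ if for all $w,x\in\Sigma^*$, $\mathrm{suff}^{i-1}(\tau(w))=\mathrm{suff}^{i-1}(\tau(x))$ and $\mathrm{suff}^{j-1}(\tau(f^{\gets}(w)))=\mathrm{suff}^{j-1}(\tau(f^{\gets}(x)))$ imply $f^{\to}_w=f^{\to}_x$. $f$ is $k$-TISL on $\tau$ if it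 is $k,1$-TIOSL on $\tau$, and $k$-TOSL on $\tau$ if it is $1,k$-TIOSL on $\tau$. Actions of $f$: $\mathbb{A}_f:=\{\langle x,y\rangle\in\Sigma\times\Gamma^*\mid\exists z\in\Sigma^*.\ f^{\gets}(zx)=f^{\gets}(z)y\}$, written $x:y$. The run $f^{\Leftarrow}(x)\in\mathbb{A}_f^*$: if $|x|\le1$, $f^{\Leftarrow}(x):=x:f^{\gets}(x)$; if $x=yz$ with $|y|\ge1$, $|z|=1$, then $f^{\Leftarrow}(x):=f^{\Leftarrow}(y)(z:w)$ where $f^{\gets}(x)=f^{\gets}(y)w$. For a tier $\upsilon$ on $\Sigma\times\Gamma^*$, $f$ is $k$-TSSL on $\upsilon$ if for all $x,y\in\Sigma^*$, $\mathrm{suff}^{k-1}(\upsilon(f^{\Leftarrow}(x)))=\mathrm{suff}^{k-1}(\upsilon(f^{\Leftarrow}(y)))$ implies $f^{\to}_x=f^{\to}_y$. *)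

theory Defs
  imports Main "HOL-Library.Sublist"
begin

(* Strings are lists over a single symbol type 'c; the alphabets Sig, Gam
   are finite sets of symbols.  The boundary symbol is modelled by None. *)

definition suff :: "nat \<Rightarrow> 'c list \<Rightarrow> 'c option list" where
  "suff m x = drop (length x) (replicate m None @ map Some x)"

definition lcp :: "'c list set \<Rightarrow> 'c list" where
  "lcp A = (THE p. (\<forall>a\<in>A. prefix p a) \<and> (\<forall>q. (\<forall>a\<in>A. prefix q a) \<longrightarrow> prefix q p))"

definition fl :: "'c set \<Rightarrow> ('c list \<Rightarrow> 'c list) \<Rightarrow> 'c list \<Rightarrow> 'c list" where
  "fl Sig f x = lcp {f (x @ y) | y. y \<in> lists Sig}"

(* f^{->}_x(y), defined by f(xy) = f^{<-}(x) f^{->}_x(y) *)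
definition fr :: "'c set \<Rightarrow> ('c list \<Rightarrow> 'c list) \<Rightarrow> 'c list \<Rightarrow> 'c list \<Rightarrow> 'c list" where
  "fr Sig f x y = drop (length (fl Sig f x)) (f (x @ y))"

definition same_tail :: "'c set \<Rightarrow> ('c list \<Rightarrow> 'c list) \<Rightarrow> 'c list \<Rightarrow> 'c list \<Rightarrow> bool" where
  "same_tail Sig f w x \<longleftrightarrow> (\<forall>y\<in>lists Sig. fr Sig f w y = fr Sig f x y)"

(* a tier is given by the set of symbols it keeps: tau(a) = a if T a, else lambda *)
definition tier :: "('a \<Rightarrow> bool) \<Rightarrow> 'a list \<Rightarrow> 'a list" where
  "tier T xs = filter T xs"

definition TIOSL :: "'c set \<Rightarrow> ('c list \<Rightarrow> 'c list) \<Rightarrow> nat \<Rightarrow> nat \<Rightarrow> ('c \<Rightarrow> bool) \<Rightarrow> bool" where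
  "TIOSL Sig f i j T \<longleftrightarrow>
     (\<forall>w\<in>lists Sig. \<forall>x\<in>lists Sig.
        suff (i - 1) (tier T w) = suff (i - 1) (tier T x) \<and>
        suff (j - 1) (tier T (fl Sig f w)) = suff (j - 1) (tier T (fl Sig f x))
        \<longrightarrow> same_tail Sig f w x)"

definition TISL :: "'c set \<Rightarrow> ('c list \<Rightarrow> 'c list) \<Rightarrow> nat \<Rightarrow> ('c \<Rightarrow> bool) \<Rightarrow> bool" where
  "TISL Sig f k T \<longleftrightarrow> TIOSL Sig f k 1 T"

definition TOSL :: "'c set \<Rightarrow> ('c list \<Rightarrow> 'c list) \<Rightarrow> nat \<Rightarrow> ('c \<Rightarrow> bool) \<Rightarrow> bool" where
  "TOSL Sig f k T \<longleftrightarrow> TIOSL Sig f 1 k T"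

(* Actions x:y are pairs (x, y); the input part x is a string of length <= 1
   (length 0 only for the run of the empty string, lambda : f^{<-}(lambda)). *)
definition run :: "'c set \<Rightarrow> ('c list \<Rightarrow> 'c list) \<Rightarrow> 'c list \<Rightarrow> ('c list \<times> 'c list) list" where
  "run Sig f x =
     (if length x \<le> 1 then [(x, fl Sig f x)]
      else (take 1 x, fl Sig f (take 1 x)) #
           map (\<lambda>i. ([x ! i], drop (length (fl Sig f (take i x))) (fl Sig f (take (Suc i) x))))
               [1..<length x])"

definition TSSL :: "'c set \<Rightarrow> ('c list \<Rightarrow> 'c list) \<Rightarrow> nat \<Rightarrow> ('c list \<times> 'c list \<Rightarrow> bool) \<Rightarrow> bool" where
  "TSSL Sig f k U \<longleftrightarrow>
     (\<forall>x\<in>lists Sig. \<forall>y\<in>lists Sig.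
        suff (k - 1) (tier U (run Sig f x)) = suff (k - 1) (tier U (run Sig f y))
        \<longrightarrow> same_tail Sig f x y)"

end

theory Submission
  imports Defs
begin

text \<open>
  The run of \<open>f\<close> on \<open>x\<close> records, action by action, both the input symbols of \<open>x\<close> and the
  increments of \<open>f\<^sup>\<leftarrow>\<close> along the prefixes of \<open>x\<close>, whose concatenation is \<open>f\<^sup>\<leftarrow>(x)\<close>. Hence a
  tier on actions can simulate a tier on input or on output symbols. For the input side, keep
  the actions whose input symbol lies on \<open>\<tau>\<close>: the tier of the run then projects onto \<open>\<tau>(x)\<close>.
  For the output side, keep the actions whose output contains a symbol of \<open>\<tau>\<close>: concatenating
  the \<open>\<tau>\<close>-projections of their outputs gives \<open>\<tau>(f\<^sup>\<leftarrow>(x))\<close>, and since each kept action contributes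
  at least one symbol, the last \<open>k-1\<close> kept actions determine the last \<open>k-1\<close> symbols of it.
\<close>

lemma lcp_eq_Longest_common_prefix: "A \<noteq> {} \<Longrightarrow> lcp A = Longest_common_prefix A"
  unfolding lcp_def
  by (rule the_equality)
    (simp_all add: Longest_common_prefix_prefix Longest_common_prefix_max_prefix
      prefix_order.antisym)

lemma prefix_fl_snoc:
  assumes "a \<in> Sig"
  shows "prefix (fl Sig f w) (fl Sig f (w @ [a]))"
proof -
  let ?F = "\<lambda>w. {f (w @ y) |y. y \<in> lists Sig}"
  have "?F (w @ [a]) \<subseteq> ?F w"
    using assms by fastforce
  moreover have "?F (w @ [a]) \<noteq> {}" "?F w \<noteq> {}"
    by auto
  ultimately show ?thesis
    unfolding fl_def
    by (simp add: lcp_eq_Longest_common_prefix Longest_common_prefix_prefix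
        Longest_common_prefix_max_prefix subset_iff)
qed

lemma prefix_chain_telescope:
  assumes "1 \<le> n" "\<And>i. 1 \<le> i \<Longrightarrow> i < n \<Longrightarrow> prefix (g i) (g (Suc i))"
  shows "g 1 @ concat (map (\<lambda>i. drop (length (g i)) (g (Suc i))) [1..<n]) = g n"
  using assms(1)
proof (induction n rule: dec_induct)
  case (step m)
  then have "prefix (g m) (g (Suc m))"
    using assms(2) by simp
  then show ?case
    using step by (auto simp: prefix_def)
qed simp

lemma suff_eq: "suff m L = replicate (m - length L) None @ map Some (drop (length L - m) L)"
  unfolding suff_def by (cases "length L \<le> m") (auto simp: drop_map)

lemma suff_0 [simp]: "suff 0 L = []"
  by (simp add: suff_def)

lemma suff_map: "suff m (map g L) = map (map_option g) (suff m L)"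
  by (simp add: suff_eq drop_map)

lemma suff_append_long: "m \<le> length B \<Longrightarrow> suff m (A @ B) = suff m B"
  by (simp add: suff_eq)

lemma drop_eq_if_suff_eq:
  assumes "suff m L1 = suff m L2"
  shows "drop (length L1 - m) L1 = drop (length L2 - m) L2"
proof -
  have "filter (\<lambda>x. x \<noteq> None) (suff m L) = map Some (drop (length L - m) L)" for L :: "'a list"
    by (simp add: suff_eq filter_map comp_def)
  then show ?thesis
    using arg_cong[OF assms, of "filter (\<lambda>x. x \<noteq> None)"] by (simp add: inj_map_eq_map)
qed

lemma length_le_length_concat: "[] \<notin> set xss \<Longrightarrow> length xss \<le> length (concat xss)"
proof (induction xss)
  case (Cons xs xss)
  then have "length xs > 0" "length xss \<le> length (concat xss)"
    by auto
  then show ?case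
    by (simp del: length_greater_0_conv)
qed simp

lemma concat_filter_neq_Nil: "concat (filter (\<lambda>xs. xs \<noteq> []) xss) = concat xss"
  by (induction xss) auto

lemma suff_concat_drop:
  assumes "[] \<notin> set L"
  shows "suff m (concat L) = suff m (concat (drop (length L - m) L))"
proof (cases "length L \<le> m")
  case False
  have "m \<le> length (concat (drop (length L - m) L))"
    using False assms length_le_length_concat[of "drop (length L - m) L"]
    by (auto dest: in_set_dropD)
  then show ?thesis
    by (metis append_take_drop_id concat_append suff_append_long)
next
  case True
  then show ?thesis
    by simp
qed

lemma suff_concat_eq:
  assumes "suff m L1 = suff m L2" "[] \<notin> set L1" "[] \<notin> set L2"
  shows "suff m (concat L1) = suff m (concat L2)"
proof -
  have "suff m (concat L1) = suff m (concat (drop (length L1 - m) L1))"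
    using assms(2) by (rule suff_concat_drop)
  also have "\<dots> = suff m (concat (drop (length L2 - m) L2))"
    by (simp only: drop_eq_if_suff_eq[OF assms(1)])
  also have "\<dots> = suff m (concat L2)"
    using assms(3) by (rule suff_concat_drop[symmetric])
  finally show ?thesis .
qed

lemma map_fst_run: "map fst (run Sig f x) = (if x = [] then [[]] else map (\<lambda>a. [a]) x)"
proof (cases "length x \<le> 1")
  case True
  then show ?thesis
    by (cases x) (auto simp: run_def)
next
  case False
  then obtain a r where x: "x = a # r"
    by (cases x) auto
  have "map (\<lambda>i. [x ! i]) [1..<length x] = map (\<lambda>a. [a]) r"
    by (rule nth_equalityI) (simp_all add: x del: upt_Suc)
  then show ?thesis
    using False by (simp add: run_def comp_def x)
qed

lemma concat_map_snd_run:
  assumes "x \<in> lists Sig"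
  shows "concat (map snd (run Sig f x)) = fl Sig f x"
proof (cases "length x \<le> 1")
  case True
  then show ?thesis
    by (simp add: run_def)
next
  case False
  have "fl Sig f (take 1 x) @
      concat (map (\<lambda>i. drop (length (fl Sig f (take i x))) (fl Sig f (take (Suc i) x))) [1..<length x])
      = fl Sig f (take (length x) x)"
  proof (rule prefix_chain_telescope)
    fix i
    assume "i < length x"
    moreover have "x ! i \<in> Sig" if "i < length x"
      using assms that by (auto simp: in_lists_conv_set)
    ultimately show "prefix (fl Sig f (take i x)) (fl Sig f (take (Suc i) x))"
      by (simp add: take_Suc_conv_app_nth prefix_fl_snoc)
  qed (use False in simp)
  then show ?thesis
    using False by (simp add: run_def comp_def)
qed

lemma TISL_iff:
  "TISL Sig f k T \<longleftrightarrow> (\<forall>w\<in>lists Sig. \<forall>x\<in>lists Sig.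
     suff (k - 1) (tier T w) = suff (k - 1) (tier T x) \<longrightarrow> same_tail Sig f w x)"
  by (simp add: TISL_def TIOSL_def)

lemma TOSL_iff:
  "TOSL Sig f k T \<longleftrightarrow> (\<forall>w\<in>lists Sig. \<forall>x\<in>lists Sig.
     suff (k - 1) (tier T (fl Sig f w)) = suff (k - 1) (tier T (fl Sig f x)) \<longrightarrow> same_tail Sig f w x)"
  by (simp add: TOSL_def TIOSL_def)

definition input_tier :: "('c \<Rightarrow> bool) \<Rightarrow> 'c list \<times> 'c list \<Rightarrow> bool" where
  "input_tier T act \<longleftrightarrow> fst act \<noteq> [] \<and> T (hd (fst act))"

definition output_tier :: "('c \<Rightarrow> bool) \<Rightarrow> 'c list \<times> 'c list \<Rightarrow> bool" where
  "output_tier T act \<longleftrightarrow> filter T (snd act) \<noteq> []"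

lemma input_tier_run: "map (hd \<circ> fst) (tier (input_tier T) (run Sig f x)) = tier T x"
proof -
  have "map (hd \<circ> fst) (filter (input_tier T) (run Sig f x))
      = map hd (filter (\<lambda>a. a \<noteq> [] \<and> T (hd a)) (map fst (run Sig f x)))"
    by (simp add: input_tier_def[abs_def] filter_map comp_def)
  also have "\<dots> = filter T x"
    by (simp add: map_fst_run filter_map comp_def)
  finally show ?thesis
    by (simp add: tier_def)
qed

lemma output_tier_run:
  assumes "x \<in> lists Sig"
  shows "concat (map (filter T \<circ> snd) (tier (output_tier T) (run Sig f x))) = tier T (fl Sig f x)"
proof -
  have "concat (map (filter T \<circ> snd) (filter (output_tier T) (run Sig f x)))
      = concat (filter (\<lambda>xs. xs \<noteq> []) (map (filter T \<circ> snd) (run Sig f x)))"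
    by (simp add: output_tier_def[abs_def] filter_map comp_def)
  also have "\<dots> = concat (map (filter T \<circ> snd) (run Sig f x))"
    by (rule concat_filter_neq_Nil)
  also have "\<dots> = filter T (concat (map snd (run Sig f x)))"
    by (simp add: filter_concat comp_def)
  finally show ?thesis
    using assms by (simp add: tier_def concat_map_snd_run)
qed

lemma TISL_imp_TSSL_input_tier:
  assumes "TISL Sig f k T"
  shows "TSSL Sig f k (input_tier T)"
  unfolding TSSL_def
proof (intro ballI impI)
  fix x y
  assume "x \<in> lists Sig" "y \<in> lists Sig"
    and "suff (k - 1) (tier (input_tier T) (run Sig f x)) = suff (k - 1) (tier (input_tier T) (run Sig f y))"
  then have "suff (k - 1) (tier T x) = suff (k - 1) (tier T y)"
    by (metis input_tier_run suff_map)
  with assms \<open>x \<in> lists Sig\<close> \<open>y \<in> lists Sig\<close> show "same_tail Sig f x y"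
    by (simp add: TISL_iff)
qed

lemma TOSL_imp_TSSL_output_tier:
  assumes "TOSL Sig f k T"
  shows "TSSL Sig f k (output_tier T)"
  unfolding TSSL_def
proof (intro ballI impI)
  fix x y
  let ?outs = "\<lambda>x. map (filter T \<circ> snd) (tier (output_tier T) (run Sig f x))"
  assume x: "x \<in> lists Sig" and y: "y \<in> lists Sig"
    and run_tiers_eq: "suff (k - 1) (tier (output_tier T) (run Sig f x)) = suff (k - 1) (tier (output_tier T) (run Sig f y))"
  have nonempty: "[] \<notin> set (?outs z)" for z
    by (auto simp: tier_def output_tier_def[abs_def])
  from run_tiers_eq have "suff (k - 1) (?outs x) = suff (k - 1) (?outs y)"
    by (simp add: suff_map)
  then have "suff (k - 1) (concat (?outs x)) = suff (k - 1) (concat (?outs y))"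
    by (rule suff_concat_eq[OF _ nonempty nonempty])
  then have "suff (k - 1) (tier T (fl Sig f x)) = suff (k - 1) (tier T (fl Sig f y))"
    by (simp add: output_tier_run x y)
  with assms x y show "same_tail Sig f x y"
    by (simp add: TOSL_iff)
qed

theorem proposition17:
  fixes Sig Gam :: "'c set" and f :: "'c list \<Rightarrow> 'c list" and k :: nat and T :: "'c \<Rightarrow> bool"
  assumes "finite Sig" and "finite Gam" and "k > 0"
    and "\<forall>x\<in>lists Sig. f x \<in> lists Gam"
  shows "(TISL Sig f k T \<longrightarrow> (\<exists>U. TSSL Sig f k U)) \<and>
         (TOSL Sig f k T \<longrightarrow> (\<exists>V. TSSL Sig f k V))"
  using TISL_imp_TSSL_input_tier TOSL_imp_TSSL_output_tier by blast

end
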